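(* (i) For $0\le\alpha<1$, the $\mathcal{S}^*_{car}$-radius of the class $\mathcal{BL}(\alpha)$ is $1/(1+\sqrt{1+\alpha})$. (ii) For $\beta>1$, the $\mathcal{S}^*_{car}$-radius of the class $\mathcal{M}(\beta)$ is $1/(4\beta-3)$.
   Context: $\mathbb{D}=\{z:|z|<1\}$; $\mathcal{A}$ is the class of analytic $f$ on $\mathbb{D}$ with $f(0)=0$, $f'(0)=1$. $F\prec G$ means $F=G\circ w$ for an analytic $w:\mathbb{D}\to\mathbb{D}$ with $w(0)=0$. $\mathcal{S}^*_{car}$ is the class of $f\in\mathcal{A}$ with $zf'(z)/f(z)\prec 1+z+z^2/2$. $\mathcal{BL}(\alpha)$ is the class of $f\in\mathcal{A}$ with $zf'(z)/f(z)\prec 1+z/(1-\alpha z^2)$; $\mathcal{M}(\beta)$ is the class of $f\in\mathcal{A}$ with $\operatorname{Re}(zf'(z)/f(z))<\beta$ on $\mathbb{D}$. For a class $\mathcal{F}\subseteq\mathcal{A}$, the $\mathcal{S}^*_{car}$-radius of $\mathcal{F}$ is the supremum of all $r\in(0,1]$ such that $f(rz)/r\in\mathcal{S}^*_{car}$ for every $f\in\mathcal{F}$. *)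

theory Defs
  imports "HOL-Analysis.Analysis"
begin

definition unit_disc :: "complex set" where
  "unit_disc = ball 0 1"

definition subordinate :: "(complex \<Rightarrow> complex) \<Rightarrow> (complex \<Rightarrow> complex) \<Rightarrow> bool" where
  "subordinate F G \<longleftrightarrow> (\<exists>w. w holomorphic_on unit_disc \<and> w ` unit_disc \<subseteq> unit_disc \<and> w 0 = 0
       \<and> (\<forall>z\<in>unit_disc. F z = G (w z)))"

definition class_A :: "(complex \<Rightarrow> complex) set" where
  "class_A = {f. f holomorphic_on unit_disc \<and> f 0 = 0 \<and> deriv f 0 = 1}"

text \<open>The function z f'(z)/f(z), with its removable value 1 at z = 0 (for f in class A).\<close>
definition zf_over_f :: "(complex \<Rightarrow> complex) \<Rightarrow> complex \<Rightarrow> complex" where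
  "zf_over_f f z = (if z = 0 then 1 else z * deriv f z / f z)"

definition S_car :: "(complex \<Rightarrow> complex) set" where
  "S_car = {f \<in> class_A. zf_over_f f holomorphic_on unit_disc \<and>
      subordinate (zf_over_f f) (\<lambda>z. 1 + z + z\<^sup>2 / 2)}"

definition BL :: "real \<Rightarrow> (complex \<Rightarrow> complex) set" where
  "BL \<alpha> = {f \<in> class_A. zf_over_f f holomorphic_on unit_disc \<and>
      subordinate (zf_over_f f) (\<lambda>z. 1 + z / (1 - complex_of_real \<alpha> * z\<^sup>2))}"

text \<open>Class M(beta): Re(z f'/f) < beta on D (z f'/f being analytic, i.e. f nonvanishing on D minus 0).\<close>
definition M_class :: "real \<Rightarrow> (complex \<Rightarrow> complex) set" where
  "M_class \<beta> = {f \<in> class_A. (\<forall>z\<in>unit_disc. z \<noteq> 0 \<longrightarrow> f z \<noteq> 0) \<and>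
      (\<forall>z\<in>unit_disc. Re (zf_over_f f z) < \<beta>)}"

definition Scar_radius :: "(complex \<Rightarrow> complex) set \<Rightarrow> real" where
  "Scar_radius F = Sup {r. 0 < r \<and> r \<le> 1 \<and>
      (\<forall>f\<in>F. (\<lambda>z. f (complex_of_real r * z) / complex_of_real r) \<in> S_car)}"

end

theory Submission
  imports Defs "HOL-Complex_Analysis.Conformal_Mappings"
begin

text \<open>
  The function \<phi>(w) = 1 + w + w^2/2 = ((1 + w)^2 + 1)/2 maps the unit disc onto a domain that
  contains the disc |P - 3/2| < 1, with explicit inverse P \<mapsto> sqrt(2P - 1) - 1, and that meets
  the real axis only in [1/2, \<infinity>). So f(rz)/r belongs to S*_car as soon as z f'/f maps the disc of
  radius r into |P - 3/2| < 1, and it does not as soon as z f'/f takes a real value below 1/2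
  somewhere in that disc.
  For both classes z f'/f is subordinate to a fixed \<psi>, namely 1 + z/(1 - \<alpha> z^2), resp.
  (1 - (2\<beta> - 1) z)/(1 - z). By Schwarz's lemma it suffices that \<psi> maps |z| < R into
  |P - 3/2| < 1, a polynomial inequality in Re z and Im z; conversely the extremal function with
  z f'/f = \<psi> has \<psi>(-t) < 1/2, resp. \<psi>(t) < 1/2, for every t > R.
\<close>

lemma mem_unit_disc [simp]: "z \<in> unit_disc \<longleftrightarrow> cmod z < 1"
  by (simp add: unit_disc_def)

lemma open_unit_disc [simp]: "open unit_disc"
  by (simp add: unit_disc_def)

lemma of_real_mult_in_unit_disc:
  assumes "0 \<le> r" "r \<le> 1" "z \<in> unit_disc"
  shows "of_real r * z \<in> unit_disc"
proof -
  have "r * cmod z \<le> cmod z"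
    using assms by (simp add: mult_left_le_one_le)
  then show ?thesis
    using assms by (simp add: norm_mult)
qed

lemma holomorphic_on_rescale:
  assumes "g holomorphic_on unit_disc" "0 \<le> r" "r \<le> 1"
  shows "(\<lambda>z. g (of_real r * z)) holomorphic_on unit_disc"
proof -
  have "(\<lambda>z. of_real r * z) ` unit_disc \<subseteq> unit_disc"
    using assms(2,3) by (auto intro: of_real_mult_in_unit_disc)
  with assms(1) show ?thesis
    using holomorphic_on_compose_gen[of "\<lambda>z. of_real r * z" unit_disc g]
    by (auto simp: o_def intro!: holomorphic_intros)
qed

subsection \<open>The cardioid domain \<phi>(\<bbbD>)\<close>

lemma cardioid_inverse:
  fixes P :: complex
  assumes "cmod (P - 3/2) < 1"
  defines "w \<equiv> csqrt (2*P - 1) - 1"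
  shows "cmod w < 1" "1 + w + w\<^sup>2/2 = P" "2*P - 1 \<notin> \<real>\<^sub>\<le>\<^sub>0"
proof -
  define s where "s = csqrt (2*P - 1)"
  define a b where "a = Re s" and "b = Im s"
  have s2: "s\<^sup>2 = 2*P - 1"
    by (simp add: s_def)
  have "a \<ge> 0"
    using csqrt_principal[of "2*P - 1"] by (auto simp: a_def s_def)
  have "cmod (s\<^sup>2 - 2) = 2 * cmod (P - 3/2)"
    using norm_mult[of 2 "P - 3/2"] by (simp add: s2 algebra_simps)
  then have "cmod (s\<^sup>2 - 2) < 2"
    using assms(1) by simp
  then have "(cmod (s\<^sup>2 - 2))\<^sup>2 < 2\<^sup>2"
    by (intro power_strict_mono) auto
  then have "(a\<^sup>2 + b\<^sup>2)\<^sup>2 < 4 * (a\<^sup>2 - b\<^sup>2)"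
    unfolding cmod_power2 a_def b_def by (simp add: power2_eq_square algebra_simps)
  also have "\<dots> \<le> (2*a)\<^sup>2"
    by simp
  finally have "a\<^sup>2 + b\<^sup>2 < 2*a"
    using \<open>a \<ge> 0\<close> power_less_imp_less_base by fastforce
  then have "(cmod (s - 1))\<^sup>2 < 1"
    unfolding cmod_power2 a_def b_def by (simp add: power2_eq_square algebra_simps)
  then show "cmod w < 1"
    by (simp add: w_def s_def power_less_one_iff)
  have "1 + w + w\<^sup>2/2 = (1 + s\<^sup>2)/2"
    unfolding w_def s_def[symmetric] by (simp add: power2_eq_square field_simps)
  also have "\<dots> = P"
    using s2 by simp
  finally show "1 + w + w\<^sup>2/2 = P" .
  have "\<bar>Re (P - 3/2)\<bar> < 1"
    using abs_Re_le_cmod[of "P - 3/2"] assms(1) by linarith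
  then show "2*P - 1 \<notin> \<real>\<^sub>\<le>\<^sub>0"
    by (auto simp: complex_nonpos_Reals_iff)
qed

text \<open>\<phi>(w) is real only if 1 + w is real or purely imaginary, and the latter is impossible in \<bbbD>.\<close>
lemma cardioid_real_value_ge:
  assumes "cmod w < 1" "1 + w + w\<^sup>2/2 = of_real c"
  shows "c \<ge> 1/2"
proof -
  define a b where "a = Re w" and "b = Im w"
  have "b * (1 + a) = 0"
    using arg_cong[OF assms(2), of Im] by (simp add: a_def b_def power2_eq_square algebra_simps)
  moreover have "a > -1"
    using abs_Re_le_cmod[of w] assms(1) by (simp add: a_def)
  ultimately have "b = 0"
    by simp
  moreover have "c = 1 + a + (a\<^sup>2 - b\<^sup>2)/2"
    using arg_cong[OF assms(2), of Re] by (simp add: a_def b_def power2_eq_square)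
  ultimately have "2*c - 1 = (1 + a)\<^sup>2"
    by (simp add: power2_eq_square algebra_simps)
  then show ?thesis
    using zero_le_power2[of "1 + a"] by linarith
qed

lemma S_car_zf_over_f_real_ge:
  assumes "g \<in> S_car" "z \<in> unit_disc" "zf_over_f g z = of_real c"
  shows "c \<ge> 1/2"
proof -
  obtain w where "w ` unit_disc \<subseteq> unit_disc" "\<forall>z\<in>unit_disc. zf_over_f g z = 1 + w z + (w z)\<^sup>2/2"
    using assms(1) unfolding S_car_def subordinate_def by blast
  with assms(2,3) show ?thesis
    by (intro cardioid_real_value_ge[of "w z"]) (auto simp: image_subset_iff)
qed

subsection \<open>Dilations and the S*_car-radius\<close>

definition dilate :: "real \<Rightarrow> (complex \<Rightarrow> complex) \<Rightarrow> complex \<Rightarrow> complex" where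
  "dilate r f = (\<lambda>z. f (of_real r * z) / of_real r)"

lemma
  assumes f: "f holomorphic_on unit_disc" and r: "0 < r" "r \<le> 1" and z: "z \<in> unit_disc"
  shows deriv_dilate: "deriv (dilate r f) z = deriv f (of_real r * z)"
    and zf_over_f_dilate: "zf_over_f (dilate r f) z = zf_over_f f (of_real r * z)"
proof -
  have "of_real r * z \<in> unit_disc"
    using r z by (intro of_real_mult_in_unit_disc) auto
  then have "(f has_field_derivative deriv f (of_real r * z)) (at (of_real r * z))"
    using holomorphic_derivI[OF f open_unit_disc] by simp
  then have "(dilate r f has_field_derivative deriv f (of_real r * z) * of_real r / of_real r) (at z)"
    unfolding dilate_def by (auto intro!: derivative_eq_intros DERIV_chain2)
  then show deriv: "deriv (dilate r f) z = deriv f (of_real r * z)"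
    using r by (simp add: DERIV_imp_deriv)
  show "zf_over_f (dilate r f) z = zf_over_f f (of_real r * z)"
    unfolding zf_over_f_def deriv using r by (simp add: dilate_def field_simps)
qed

lemma dilate_in_S_car:
  assumes f: "f \<in> class_A" "zf_over_f f holomorphic_on unit_disc" and r: "0 < r" "r \<le> 1"
    and disc: "\<And>z. z \<in> unit_disc \<Longrightarrow> cmod (zf_over_f f (of_real r * z) - 3/2) < 1"
  shows "dilate r f \<in> S_car"
proof -
  have hol_f: "f holomorphic_on unit_disc" and "f 0 = 0" "deriv f 0 = 1"
    using f(1) by (auto simp: class_A_def)
  have "dilate r f \<in> class_A"
    using holomorphic_on_rescale[OF hol_f] r \<open>f 0 = 0\<close> \<open>deriv f 0 = 1\<close> deriv_dilate[OF hol_f r, of 0]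
    by (auto simp: class_A_def dilate_def intro!: holomorphic_intros)
  moreover have hol_p: "(\<lambda>z. zf_over_f f (of_real r * z)) holomorphic_on unit_disc"
    using holomorphic_on_rescale[OF f(2)] r by simp
  then have "zf_over_f (dilate r f) holomorphic_on unit_disc"
    by (rule holomorphic_transform) (simp add: zf_over_f_dilate[OF hol_f r])
  moreover have "subordinate (zf_over_f (dilate r f)) (\<lambda>z. 1 + z + z\<^sup>2/2)"
    unfolding subordinate_def
  proof (intro exI conjI)
    let ?w = "\<lambda>z. csqrt (2 * zf_over_f f (of_real r * z) - 1) - 1"
    show "?w holomorphic_on unit_disc"
      using cardioid_inverse(3)[OF disc] by (intro holomorphic_intros hol_p) auto
    show "?w ` unit_disc \<subseteq> unit_disc" "?w 0 = 0"
      using cardioid_inverse(1)[OF disc] by (auto simp: zf_over_f_def)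
    show "\<forall>z\<in>unit_disc. zf_over_f (dilate r f) z = 1 + ?w z + (?w z)\<^sup>2/2"
      using cardioid_inverse(2)[OF disc] zf_over_f_dilate[OF hol_f r] by simp
  qed
  ultimately show ?thesis
    by (simp add: S_car_def)
qed

lemma dilate_in_S_car_if_subordinate:
  assumes f: "f \<in> class_A" "zf_over_f f holomorphic_on unit_disc"
    and sub: "subordinate (zf_over_f f) \<psi>"
    and \<psi>: "\<And>\<zeta>. cmod \<zeta> < R \<Longrightarrow> cmod (\<psi> \<zeta> - 3/2) < 1"
    and r: "0 < r" "r \<le> R" "r \<le> 1"
  shows "dilate r f \<in> S_car"
proof (rule dilate_in_S_car[OF f r(1,3)])
  fix z :: complex
  assume z: "z \<in> unit_disc"
  obtain w where w: "w holomorphic_on unit_disc" "w ` unit_disc \<subseteq> unit_disc" "w 0 = 0"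
    and eq: "\<forall>z\<in>unit_disc. zf_over_f f z = \<psi> (w z)"
    using sub unfolding subordinate_def by blast
  have rz: "of_real r * z \<in> unit_disc"
    using r z by (intro of_real_mult_in_unit_disc) auto
  have "cmod (w (of_real r * z)) \<le> cmod (of_real r * z)"
    using w rz by (intro Schwarz_Lemma(1)) (auto simp: unit_disc_def image_subset_iff)
  also have "\<dots> < r"
    using r z by (simp add: norm_mult)
  finally show "cmod (zf_over_f f (of_real r * z) - 3/2) < 1"
    using eq rz \<psi> r(2) by simp
qed

lemma dilate_notin_S_car:
  assumes f: "f holomorphic_on unit_disc" and r: "0 < r" "r \<le> 1" and "cmod \<zeta> < r"
    and "zf_over_f f \<zeta> = of_real c" "c < 1/2"
  shows "dilate r f \<notin> S_car"
proof
  assume "dilate r f \<in> S_car"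
  moreover have "\<zeta> / of_real r \<in> unit_disc"
    using assms by (simp add: norm_divide)
  moreover have "zf_over_f (dilate r f) (\<zeta> / of_real r) = of_real c"
    using zf_over_f_dilate[OF f r \<open>\<zeta> / of_real r \<in> unit_disc\<close>] assms by simp
  ultimately show False
    using S_car_zf_over_f_real_ge \<open>c < 1/2\<close> by fastforce
qed

lemma Scar_radius_eqI:
  assumes "F \<subseteq> class_A" "0 < R" "R \<le> 1"
    and inside: "\<And>f r. f \<in> F \<Longrightarrow> 0 < r \<Longrightarrow> r \<le> R \<Longrightarrow> dilate r f \<in> S_car"
    and beyond: "\<And>t. R < t \<Longrightarrow> t < 1 \<Longrightarrow> \<exists>f\<in>F. \<exists>\<zeta> c. cmod \<zeta> = t \<and> zf_over_f f \<zeta> = of_real c \<and> c < 1/2"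
  shows "Scar_radius F = R"
proof -
  have "\<exists>f\<in>F. dilate r f \<notin> S_car" if "R < r" "r \<le> 1" for r
  proof -
    have "R < (R + r)/2" "(R + r)/2 < 1"
      using that by auto
    then obtain f \<zeta> c where "f \<in> F" "cmod \<zeta> = (R + r)/2" "zf_over_f f \<zeta> = of_real c" "c < 1/2"
      using beyond by blast
    moreover from this have "dilate r f \<notin> S_car"
      using that assms(1,2) by (intro dilate_notin_S_car) (auto simp: class_A_def)
    ultimately show ?thesis
      by blast
  qed
  then have "r \<le> R" if "r \<le> 1" "\<forall>f\<in>F. dilate r f \<in> S_car" for r
    using that by (meson not_le)
  then have "{r. 0 < r \<and> r \<le> 1 \<and> (\<forall>f\<in>F. dilate r f \<in> S_car)} = {0<..R}"
    using assms(3) inside by auto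
  then show ?thesis
    using assms(2) by (simp add: Scar_radius_def dilate_def)
qed

lemma Scar_radius_subordination_class:
  assumes F: "\<And>f. f \<in> F \<Longrightarrow>
      f \<in> class_A \<and> zf_over_f f holomorphic_on unit_disc \<and> subordinate (zf_over_f f) \<psi>"
    and R: "0 < R" "R \<le> 1"
    and inside: "\<And>\<zeta>. cmod \<zeta> < R \<Longrightarrow> cmod (\<psi> \<zeta> - 3/2) < 1"
    and extremal: "f\<^sub>0 \<in> F" "\<And>z. z \<in> unit_disc \<Longrightarrow> zf_over_f f\<^sub>0 z = \<psi> z"
    and beyond: "\<And>t. R < t \<Longrightarrow> t < 1 \<Longrightarrow> \<exists>\<zeta> c. cmod \<zeta> = t \<and> \<psi> \<zeta> = of_real c \<and> c < 1/2"
  shows "Scar_radius F = R"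
proof (rule Scar_radius_eqI[OF _ R])
  show "F \<subseteq> class_A"
    using F by blast
  show "dilate r f \<in> S_car" if "f \<in> F" "0 < r" "r \<le> R" for f r
    using F[OF that(1)] inside that R(2) by (intro dilate_in_S_car_if_subordinate) auto
  show "\<exists>f\<in>F. \<exists>\<zeta> c. cmod \<zeta> = t \<and> zf_over_f f \<zeta> = of_real c \<and> c < 1/2" if "R < t" "t < 1" for t
    using beyond[OF that] extremal that by fastforce
qed

subsection \<open>Prescribing z f'/f\<close>

lemma exists_class_A_with_zf_over_f:
  assumes "h holomorphic_on unit_disc"
  obtains f where "f \<in> class_A" "\<forall>z\<in>unit_disc. z \<noteq> 0 \<longrightarrow> f z \<noteq> 0"
    "\<And>z. z \<in> unit_disc \<Longrightarrow> zf_over_f f z = 1 + z * h z"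
proof -
  obtain G where G: "\<And>z. z \<in> unit_disc \<Longrightarrow> (G has_field_derivative h z) (at z)"
    using holomorphic_convex_primitive'[of unit_disc h] assms
    by (metis at_within_open convex_ball open_unit_disc unit_disc_def)
  define f where "f z = z * exp (G z - G 0)" for z
  have f': "(f has_field_derivative exp (G z - G 0) + z * (exp (G z - G 0) * h z)) (at z)"
    if "z \<in> unit_disc" for z
    unfolding f_def using G[OF that] by (auto intro!: derivative_eq_intros)
  then have "f holomorphic_on unit_disc"
    using holomorphic_on_open[OF open_unit_disc] by blast
  moreover have "deriv f z = exp (G z - G 0) + z * (exp (G z - G 0) * h z)" if "z \<in> unit_disc" for z
    using DERIV_imp_deriv[OF f'[OF that]] .
  ultimately show ?thesis
    by (intro that) (auto simp: class_A_def zf_over_f_def f_def field_simps)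
qed

lemma zf_over_f_holomorphic:
  assumes f: "f \<in> class_A" and nz: "\<forall>z\<in>unit_disc. z \<noteq> 0 \<longrightarrow> f z \<noteq> 0"
  shows "zf_over_f f holomorphic_on unit_disc"
proof -
  have hol_f: "f holomorphic_on unit_disc" and "f 0 = 0" "deriv f 0 = 1"
    using f by (auto simp: class_A_def)
  define q where "q z = (if z = 0 then deriv f 0 else (f z - f 0) / (z - 0))" for z
  have "q holomorphic_on unit_disc"
    unfolding q_def using hol_f by (intro pole_lemma) (auto simp: interior_open)
  moreover have "q z \<noteq> 0" if "z \<in> unit_disc" for z
    using nz that \<open>f 0 = 0\<close> \<open>deriv f 0 = 1\<close> by (auto simp: q_def)
  ultimately have "(\<lambda>z. deriv f z / q z) holomorphic_on unit_disc"
    by (auto intro!: holomorphic_on_divide holomorphic_deriv[OF hol_f open_unit_disc])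
  then show ?thesis
    by (rule holomorphic_transform) (simp add: q_def zf_over_f_def \<open>f 0 = 0\<close> \<open>deriv f 0 = 1\<close>)
qed

text \<open>The last hypothesis says that E lies above its chord over [-p, p].\<close>
lemma pos_if_above_positive_chord:
  fixes E :: "real \<Rightarrow> real"
  assumes "\<bar>x\<bar> \<le> p" "E p > 0" "E (-p) > 0"
    and "(p + x) * E p + (p - x) * E (-p) \<le> 2 * p * E x"
  shows "E x > 0"
proof (cases "p = 0")
  case True
  with assms show ?thesis
    by simp
next
  case False
  then have "p > 0"
    using assms(1) by linarith
  have "(p + x) * E p \<ge> 0" "(p - x) * E (-p) \<ge> 0"
    using assms(1-3) by simp_all
  moreover have "(p + x) * E p > 0 \<or> (p - x) * E (-p) > 0"
    using assms(1-3) \<open>p > 0\<close> by (cases "x \<ge> 0") simp_all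
  ultimately have "2 * p * E x > 0"
    using assms(4) by linarith
  with \<open>p > 0\<close> show ?thesis
    by (simp add: zero_less_mult_iff)
qed

lemma BL_quartic_ineq:
  fixes a x y p :: real
  assumes "x\<^sup>2 + y\<^sup>2 = p\<^sup>2" "0 \<le> p" "0 \<le> a" "a*p\<^sup>2 + 2*p < 1"
  shows "(a*(x\<^sup>2 - y\<^sup>2) + 2*x - 1)\<^sup>2 + (2*a*x*y + 2*y)\<^sup>2 < 4*((1 - a*(x\<^sup>2 - y\<^sup>2))\<^sup>2 + (2*a*x*y)\<^sup>2)"
proof -
  \<comment> \<open>on the circle x^2 + y^2 = p^2 the difference of the two sides is a concave quadratic in x\<close>
  define E where "E t = 3*(1 + 2*a*p\<^sup>2 - 4*a*t\<^sup>2 + a\<^sup>2*p^4) - 4*p\<^sup>2 - 4*(a*p\<^sup>2 - 1)*t" for t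
  have "4*((1 - a*(x\<^sup>2 - y\<^sup>2))\<^sup>2 + (2*a*x*y)\<^sup>2) - ((a*(x\<^sup>2 - y\<^sup>2) + 2*x - 1)\<^sup>2 + (2*a*x*y + 2*y)\<^sup>2)
      = 3*(1 + 2*a*(x\<^sup>2 + y\<^sup>2) - 4*a*x\<^sup>2 + a\<^sup>2*(x\<^sup>2 + y\<^sup>2)\<^sup>2) - 4*(x\<^sup>2 + y\<^sup>2) - 4*(a*(x\<^sup>2 + y\<^sup>2) - 1)*x"
    by (simp add: power2_eq_square algebra_simps)
  also have "\<dots> = E x"
    by (simp add: E_def assms(1) flip: power_mult)
  finally have E_x: "4*((1 - a*(x\<^sup>2 - y\<^sup>2))\<^sup>2 + (2*a*x*y)\<^sup>2)
      - ((a*(x\<^sup>2 - y\<^sup>2) + 2*x - 1)\<^sup>2 + (2*a*x*y + 2*y)\<^sup>2) = E x" .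
  have "a*p\<^sup>2 \<ge> 0"
    using assms(3) by simp
  have "E p = (3 - 2*p - 3*a*p\<^sup>2) * (1 + 2*p - a*p\<^sup>2)"
    by (simp add: E_def power2_eq_square power4_eq_xxxx algebra_simps)
  also have "\<dots> > 0"
    using assms(2,4) \<open>a*p\<^sup>2 \<ge> 0\<close> by (intro mult_pos_pos) linarith+
  finally have "E p > 0" .
  have "E (-p) = (3 + 2*p - 3*a*p\<^sup>2) * (1 - 2*p - a*p\<^sup>2)"
    by (simp add: E_def power2_eq_square power4_eq_xxxx algebra_simps)
  also have "\<dots> > 0"
    using assms(2,4) \<open>a*p\<^sup>2 \<ge> 0\<close> by (intro mult_pos_pos) linarith+
  finally have "E (-p) > 0" .
  have "\<bar>x\<bar> \<le> p"
    using assms(1,2) by (metis abs_le_square_iff abs_of_nonneg le_add_same_cancel1 zero_le_power2)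
  then have "x\<^sup>2 \<le> p\<^sup>2"
    by (metis abs_le_square_iff abs_of_nonneg assms(2))
  then have "24*a*p*(p\<^sup>2 - x\<^sup>2) \<ge> 0"
    using assms(2,3) by simp
  moreover have "2*p*E x = (p + x)*E p + (p - x)*E (-p) + 24*a*p*(p\<^sup>2 - x\<^sup>2)"
    by (simp add: E_def power2_eq_square power4_eq_xxxx algebra_simps)
  ultimately have "E x > 0"
    using pos_if_above_positive_chord[OF \<open>\<bar>x\<bar> \<le> p\<close> \<open>E p > 0\<close> \<open>E (-p) > 0\<close>] by linarith
  with E_x show ?thesis
    by linarith
qed

lemma M_quadratic_ineq:
  fixes b x y p :: real
  assumes "x\<^sup>2 + y\<^sup>2 = p\<^sup>2" "0 \<le> p" "b > 1" "(4*b - 3)*p < 1"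
  shows "((5 - 4*b)*x - 1)\<^sup>2 + ((5 - 4*b)*y)\<^sup>2 < 4*((1 - x)\<^sup>2 + y\<^sup>2)"
proof -
  define E where "E t = 3 + 4*p\<^sup>2 - (5 - 4*b)\<^sup>2*p\<^sup>2 + (2*(5 - 4*b) - 8)*t" for t
  have "4*((1 - x)\<^sup>2 + y\<^sup>2) - (((5 - 4*b)*x - 1)\<^sup>2 + ((5 - 4*b)*y)\<^sup>2)
      = 3 + 4*(x\<^sup>2 + y\<^sup>2) - (5 - 4*b)\<^sup>2*(x\<^sup>2 + y\<^sup>2) + (2*(5 - 4*b) - 8)*x"
    by (simp add: power2_eq_square algebra_simps)
  also have "\<dots> = E x"
    by (simp add: E_def assms(1))
  finally have E_x: "4*((1 - x)\<^sup>2 + y\<^sup>2) - (((5 - 4*b)*x - 1)\<^sup>2 + ((5 - 4*b)*y)\<^sup>2) = E x" .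
  have "p \<le> (4*b - 3)*p"
    using assms(2,3) by (simp add: mult_le_cancel_right1)
  have "(7 - 4*b)*p < 3"
  proof (cases "7 - 4*b \<le> 0")
    case True
    then show ?thesis
      using mult_nonpos_nonneg[OF True assms(2)] by linarith
  next
    case False
    then have "(7 - 4*b)*p \<le> 7 - 4*b"
      using \<open>p \<le> (4*b - 3)*p\<close> assms(2,4) by (intro mult_right_le_one_le) auto
    then show ?thesis
      using assms(3) by linarith
  qed
  have "E p = (3 - (7 - 4*b)*p) * (1 - (4*b - 3)*p)"
    by (simp add: E_def power2_eq_square algebra_simps)
  also have "\<dots> > 0"
    using \<open>(7 - 4*b)*p < 3\<close> assms(4) by simp
  finally have "E p > 0" .
  have "(4*b - 3)*p \<ge> 0"
    using assms(2,3) by simp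
  have "E (-p) = (1 + (4*b - 3)*p) * (3 + 4*p - (4*b - 3)*p)"
    by (simp add: E_def power2_eq_square algebra_simps)
  also have "\<dots> > 0"
    using \<open>(4*b - 3)*p \<ge> 0\<close> assms(2,4) by (intro mult_pos_pos) linarith+
  finally have "E (-p) > 0" .
  have "\<bar>x\<bar> \<le> p"
    using assms(1,2) by (metis abs_le_square_iff abs_of_nonneg le_add_same_cancel1 zero_le_power2)
  moreover have "2*p*E x = (p + x)*E p + (p - x)*E (-p)"
    by (simp add: E_def power2_eq_square algebra_simps)
  ultimately have "E x > 0"
    using pos_if_above_positive_chord[OF _ \<open>E p > 0\<close> \<open>E (-p) > 0\<close>] by simp
  with E_x show ?thesis
    by linarith
qed

lemma norm_half_quotient_lt_one:
  fixes N D :: complex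
  assumes "(cmod N)\<^sup>2 < (2 * cmod D)\<^sup>2"
  shows "D \<noteq> 0" "cmod (N / (2 * D)) < 1"
proof -
  have "cmod N < 2 * cmod D"
    using assms by (rule power_less_imp_less_base) simp
  then show "D \<noteq> 0" "cmod (N / (2 * D)) < 1"
    by (auto simp: norm_divide divide_less_eq)
qed

subsection \<open>The class BL(\<alpha>)\<close>

lemma BL_radius_root:
  fixes a :: real
  assumes "0 \<le> a"
  defines "R \<equiv> 1 / (1 + sqrt (1 + a))"
  shows "0 < R" "R < 1" "a*R\<^sup>2 + 2*R = 1"
proof -
  define s where "s = sqrt (1 + a)"
  have "s \<ge> 1" "s\<^sup>2 = 1 + a"
    using assms(1) by (simp_all add: s_def)
  then have R_s: "R * (1 + s) = 1"
    unfolding R_def s_def[symmetric] by simp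
  show "0 < R" "R < 1"
    using \<open>s \<ge> 1\<close> by (simp_all add: R_def s_def[symmetric])
  have "a*R\<^sup>2 + 2*R = (s\<^sup>2 - 1) * R\<^sup>2 + 2*R"
    using \<open>s\<^sup>2 = 1 + a\<close> by simp
  also have "\<dots> = (s - 1) * R * (R * (1 + s)) + 2*R"
    by (simp add: power2_eq_square algebra_simps)
  also have "\<dots> = (s - 1) * R + 2*R"
    by (simp add: R_s)
  also have "\<dots> = R * (1 + s)"
    by (simp add: algebra_simps)
  finally show "a*R\<^sup>2 + 2*R = 1"
    using R_s by simp
qed

lemma BL_dominant_in_disc:
  fixes a :: real and z :: complex
  assumes "0 \<le> a" "a * (cmod z)\<^sup>2 + 2 * cmod z < 1"
  shows "cmod (1 + z / (1 - of_real a * z\<^sup>2) - 3/2) < 1"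
proof -
  define x y where "x = Re z" and "y = Im z"
  define N D where "N = of_real a * z\<^sup>2 + 2*z - 1" and "D = 1 - of_real a * z\<^sup>2"
  have "Re N = a*(x\<^sup>2 - y\<^sup>2) + 2*x - 1" "Im N = 2*a*x*y + 2*y"
    "Re D = 1 - a*(x\<^sup>2 - y\<^sup>2)" "Im D = - 2*a*x*y"
    by (simp_all add: N_def D_def x_def y_def Re_power2 Im_power2 algebra_simps)
  then have norm_N: "(cmod N)\<^sup>2 = (a*(x\<^sup>2 - y\<^sup>2) + 2*x - 1)\<^sup>2 + (2*a*x*y + 2*y)\<^sup>2"
    and norm_D: "(cmod D)\<^sup>2 = (1 - a*(x\<^sup>2 - y\<^sup>2))\<^sup>2 + (2*a*x*y)\<^sup>2"
    unfolding cmod_power2 by simp_all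
  have "x\<^sup>2 + y\<^sup>2 = (cmod z)\<^sup>2"
    by (simp add: x_def y_def cmod_power2)
  from BL_quartic_ineq[OF this _ assms(1,2)]
  have "(cmod N)\<^sup>2 < (2 * cmod D)\<^sup>2"
    unfolding norm_N power_mult_distrib norm_D by simp
  note quotient = norm_half_quotient_lt_one[OF this]
  have "1 + z / (1 - of_real a * z\<^sup>2) - 3/2 = N / (2 * D)"
    using quotient(1) by (simp add: N_def D_def field_simps)
  with quotient(2) show ?thesis
    by simp
qed

lemma BL_extremal:
  fixes a :: real
  assumes "0 \<le> a" "a < 1"
  obtains f where "f \<in> BL a" "\<And>z. z \<in> unit_disc \<Longrightarrow> zf_over_f f z = 1 + z / (1 - of_real a * z\<^sup>2)"
proof -
  have "1 - of_real a * z\<^sup>2 \<noteq> 0" if "z \<in> unit_disc" for z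
  proof -
    have "a * (cmod z)\<^sup>2 \<le> a"
      using that assms(1) by (simp add: mult_left_le power_le_one)
    with assms have "cmod (of_real a * z\<^sup>2) < 1"
      by (simp add: norm_mult norm_power)
    then show ?thesis
      by auto
  qed
  then have "(\<lambda>z. 1 / (1 - of_real a * z\<^sup>2)) holomorphic_on unit_disc"
    by (intro holomorphic_intros) auto
  then obtain f where f: "f \<in> class_A" "\<forall>z\<in>unit_disc. z \<noteq> 0 \<longrightarrow> f z \<noteq> 0"
    and eq: "\<And>z. z \<in> unit_disc \<Longrightarrow> zf_over_f f z = 1 + z * (1 / (1 - of_real a * z\<^sup>2))"
    using exists_class_A_with_zf_over_f by blast
  have "subordinate (zf_over_f f) (\<lambda>z. 1 + z / (1 - of_real a * z\<^sup>2))"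
    unfolding subordinate_def using eq by (intro exI[of _ "\<lambda>z. z"]) auto
  then show ?thesis
    using f zf_over_f_holomorphic[OF f] eq by (intro that) (auto simp: BL_def)
qed

lemma Scar_radius_BL:
  fixes a :: real
  assumes "0 \<le> a" "a < 1"
  shows "Scar_radius (BL a) = 1 / (1 + sqrt (1 + a))"
proof -
  define R where "R = 1 / (1 + sqrt (1 + a))"
  note R = BL_radius_root[OF assms(1), folded R_def]
  have root_mono: "a*t\<^sup>2 + 2*t < a*u\<^sup>2 + 2*u" if "0 \<le> t" "t < u" for t u
  proof -
    have "a*t\<^sup>2 \<le> a*u\<^sup>2"
      using that assms(1) by (intro mult_left_mono power_mono) auto
    with that show ?thesis
      by simp
  qed
  obtain f\<^sub>0 where "f\<^sub>0 \<in> BL a" "\<And>z. z \<in> unit_disc \<Longrightarrow> zf_over_f f\<^sub>0 z = 1 + z / (1 - of_real a * z\<^sup>2)"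
    using BL_extremal[OF assms] by blast
  moreover have "cmod (1 + \<zeta> / (1 - of_real a * \<zeta>\<^sup>2) - 3/2) < 1" if "cmod \<zeta> < R" for \<zeta>
    using BL_dominant_in_disc[OF assms(1)] root_mono[of "cmod \<zeta>" R] that R(3) by simp
  moreover have "\<exists>\<zeta> c. cmod \<zeta> = t \<and> 1 + \<zeta> / (1 - of_real a * \<zeta>\<^sup>2) = of_real c \<and> c < 1/2"
    if "R < t" "t < 1" for t
  proof -
    have "a*t\<^sup>2 + 2*t > 1"
      using root_mono[of R t] R that by simp
    moreover have "a*t\<^sup>2 \<le> t\<^sup>2" "t\<^sup>2 < 1"
      using assms that R(1) by (simp_all add: mult_left_le_one_le power_less_one_iff)
    ultimately have "1 - t / (1 - a*t\<^sup>2) < 1/2"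
      by (simp add: field_simps)
    then show ?thesis
      using that R(1) by (intro exI[of _ "- of_real t"] exI[of _ "1 - t / (1 - a*t\<^sup>2)"]) simp
  qed
  ultimately show ?thesis
    unfolding R_def[symmetric] using R
    by (intro Scar_radius_subordination_class[where \<psi> = "\<lambda>z. 1 + z / (1 - of_real a * z\<^sup>2)"])
      (auto simp: BL_def)
qed

subsection \<open>The class M(\<beta>)\<close>

lemma M_dominant_in_disc:
  fixes b :: real and z :: complex
  assumes "b > 1" "(4*b - 3) * cmod z < 1"
  shows "cmod ((1 - of_real (2*b - 1) * z) / (1 - z) - 3/2) < 1"
proof -
  define x y where "x = Re z" and "y = Im z"
  define N D where "N = of_real (5 - 4*b) * z - 1" and "D = 1 - z"
  have "Re N = (5 - 4*b)*x - 1" "Im N = (5 - 4*b)*y" "Re D = 1 - x" "Im D = - y"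
    by (simp_all add: N_def D_def x_def y_def)
  then have norm_N: "(cmod N)\<^sup>2 = ((5 - 4*b)*x - 1)\<^sup>2 + ((5 - 4*b)*y)\<^sup>2"
    and norm_D: "(cmod D)\<^sup>2 = (1 - x)\<^sup>2 + y\<^sup>2"
    unfolding cmod_power2 by simp_all
  have "x\<^sup>2 + y\<^sup>2 = (cmod z)\<^sup>2"
    by (simp add: x_def y_def cmod_power2)
  from M_quadratic_ineq[OF this _ assms]
  have "(cmod N)\<^sup>2 < (2 * cmod D)\<^sup>2"
    unfolding norm_N power_mult_distrib norm_D by simp
  note quotient = norm_half_quotient_lt_one[OF this]
  have "(1 - of_real (2*b - 1) * z) / (1 - z) - 3/2 = N / (2 * D)"
    using quotient(1) by (simp add: N_def D_def field_simps)
  with quotient(2) show ?thesis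
    by simp
qed

text \<open>1 and 2\<beta> - 1 are mirror images in the line Re P = \<beta>, so left of it P is closer to 1.\<close>
lemma half_plane_to_unit_disc:
  fixes P :: complex and b :: real
  assumes "b > 1" "Re P < b"
  defines "c \<equiv> of_real (2*b - 1)"
  defines "w \<equiv> (P - 1) / (P - c)"
  shows "P \<noteq> c" "cmod w < 1" "P = (1 - c * w) / (1 - w)"
proof -
  show "P \<noteq> c"
    using assms by (auto simp: c_def)
  have "(Re P - (2*b - 1))\<^sup>2 - (Re P - 1)\<^sup>2 = 4 * (b - Re P) * (b - 1)"
    by (simp add: power2_eq_square algebra_simps)
  also have "\<dots> > 0"
    using assms(1,2) by simp
  finally have "(cmod (P - 1))\<^sup>2 < (cmod (P - c))\<^sup>2"
    unfolding cmod_power2 by (simp add: c_def)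
  then have "cmod (P - 1) < cmod (P - c)"
    by (rule power_less_imp_less_base) simp
  then show "cmod w < 1"
    using \<open>P \<noteq> c\<close> by (simp add: w_def norm_divide divide_less_eq)
  have "1 - c \<noteq> 0"
    using assms(1) by (simp add: c_def)
  have "1 - w = (1 - c) / (P - c)" "1 - c * w = P * (1 - c) / (P - c)"
    using \<open>P \<noteq> c\<close> by (simp_all add: w_def field_simps)
  then show "P = (1 - c * w) / (1 - w)"
    using \<open>P \<noteq> c\<close> \<open>1 - c \<noteq> 0\<close> by simp
qed

lemma M_class_subordinate:
  assumes "b > 1" "f \<in> M_class b"
  shows "subordinate (zf_over_f f) (\<lambda>z. (1 - of_real (2*b - 1) * z) / (1 - z))"
proof -
  have hol: "zf_over_f f holomorphic_on unit_disc" and re: "\<And>z. z \<in> unit_disc \<Longrightarrow> Re (zf_over_f f z) < b"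
    using assms(2) zf_over_f_holomorphic by (auto simp: M_class_def)
  note Moebius = half_plane_to_unit_disc[OF assms(1) re]
  define w where "w z = (zf_over_f f z - 1) / (zf_over_f f z - of_real (2*b - 1))" for z
  show ?thesis
    unfolding subordinate_def
  proof (intro exI conjI)
    show "w holomorphic_on unit_disc"
      unfolding w_def using hol Moebius(1) by (intro holomorphic_intros) auto
    show "w ` unit_disc \<subseteq> unit_disc" "w 0 = 0"
      using Moebius(2) by (auto simp: w_def zf_over_f_def)
    show "\<forall>z\<in>unit_disc. zf_over_f f z = (1 - of_real (2*b - 1) * w z) / (1 - w z)"
      using Moebius(3) by (simp add: w_def)
  qed
qed

lemma Re_inverse_one_minus_gt_half:
  fixes z :: complex
  assumes "cmod z < 1"
  shows "Re (1 / (1 - z)) > 1/2"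
proof -
  define x y where "x = Re z" and "y = Im z"
  have "x\<^sup>2 + y\<^sup>2 < 1"
    using assms by (simp add: x_def y_def cmod_power2 power_less_one_iff flip: cmod_power2)
  moreover have "x < 1"
    using abs_Re_le_cmod[of z] assms by (simp add: x_def)
  then have "(1 - x)\<^sup>2 + y\<^sup>2 > 0"
    by (simp add: add_pos_nonneg)
  ultimately have "1/2 < (1 - x) / ((1 - x)\<^sup>2 + y\<^sup>2)"
    by (simp add: field_simps power2_eq_square)
  also have "\<dots> = Re (1 / (1 - z))"
    by (simp add: x_def y_def Re_divide cmod_power2 power2_eq_square)
  finally show ?thesis .
qed

lemma M_class_extremal:
  assumes "b > 1"
  obtains f where "f \<in> M_class b"
    "\<And>z. z \<in> unit_disc \<Longrightarrow> zf_over_f f z = (1 - of_real (2*b - 1) * z) / (1 - z)"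
proof -
  have denom: "1 - z \<noteq> 0" if "z \<in> unit_disc" for z :: complex
    using that by auto
  then have "(\<lambda>z. of_real (2 - 2*b) / (1 - z)) holomorphic_on unit_disc"
    by (intro holomorphic_intros) auto
  then obtain f where f: "f \<in> class_A" "\<forall>z\<in>unit_disc. z \<noteq> 0 \<longrightarrow> f z \<noteq> 0"
    and eq: "\<And>z. z \<in> unit_disc \<Longrightarrow> zf_over_f f z = 1 + z * (of_real (2 - 2*b) / (1 - z))"
    using exists_class_A_with_zf_over_f by blast
  have "zf_over_f f z = 1 + of_real (2 - 2*b) * (1 / (1 - z) - 1)" if "z \<in> unit_disc" for z
    using eq[OF that] denom[OF that] by (simp add: field_simps)
  moreover have "1 + (2 - 2*b) * (Re (1 / (1 - z)) - 1) < b" if "z \<in> unit_disc" for z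
  proof -
    have "(2 - 2*b) * (Re (1 / (1 - z)) - 1) < (2 - 2*b) * (1/2 - 1)"
      using Re_inverse_one_minus_gt_half[of z] that assms by (intro mult_strict_left_mono_neg) auto
    then show ?thesis
      by (simp add: algebra_simps)
  qed
  ultimately have "Re (zf_over_f f z) < b" if "z \<in> unit_disc" for z
    using that by simp
  moreover have "zf_over_f f z = (1 - of_real (2*b - 1) * z) / (1 - z)" if "z \<in> unit_disc" for z
    using eq[OF that] denom[OF that] by (simp add: field_simps)
  ultimately show ?thesis
    using f by (intro that) (auto simp: M_class_def)
qed

lemma Scar_radius_M_class:
  assumes "b > 1"
  shows "Scar_radius (M_class b) = 1 / (4*b - 3)"
proof -
  define R where "R = 1 / (4*b - 3)"
  have R: "0 < R" "R < 1"
    using assms by (simp_all add: R_def)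
  have R_iff: "(4*b - 3) * t < 1 \<longleftrightarrow> t < R" "1 < (4*b - 3) * t \<longleftrightarrow> R < t" for t
    using assms by (simp_all add: R_def field_simps)
  obtain f\<^sub>0 where "f\<^sub>0 \<in> M_class b"
    "\<And>z. z \<in> unit_disc \<Longrightarrow> zf_over_f f\<^sub>0 z = (1 - of_real (2*b - 1) * z) / (1 - z)"
    using M_class_extremal[OF assms] by blast
  moreover have "cmod ((1 - of_real (2*b - 1) * \<zeta>) / (1 - \<zeta>) - 3/2) < 1" if "cmod \<zeta> < R" for \<zeta>
    using M_dominant_in_disc[OF assms] R_iff(1) that by simp
  moreover have "\<exists>\<zeta> c. cmod \<zeta> = t \<and> (1 - of_real (2*b - 1) * \<zeta>) / (1 - \<zeta>) = of_real c \<and> c < 1/2"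
    if "R < t" "t < 1" for t
  proof -
    have "(1 - (2*b - 1) * t) / (1 - t) < 1/2"
      using R_iff(2)[of t] that by (simp add: field_simps)
    then show ?thesis
      using that R(1)
      by (intro exI[of _ "of_real t"] exI[of _ "(1 - (2*b - 1) * t) / (1 - t)"]) simp
  qed
  ultimately show ?thesis
    unfolding R_def[symmetric] using R M_class_subordinate[OF assms] zf_over_f_holomorphic
    by (intro Scar_radius_subordination_class[where \<psi> = "\<lambda>z. (1 - of_real (2*b - 1) * z) / (1 - z)"])
      (auto simp: M_class_def)
qed

theorem theorem4p4:
  shows "(\<forall>\<alpha>::real. 0 \<le> \<alpha> \<and> \<alpha> < 1 \<longrightarrow> Scar_radius (BL \<alpha>) = 1 / (1 + sqrt (1 + \<alpha>)))
       \<and> (\<forall>\<beta>::real. \<beta> > 1 \<longrightarrow> Scar_radius (M_class \<beta>) = 1 / (4 * \<beta> - 3))"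
  using Scar_radius_BL Scar_radius_M_class by simp

end
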